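(* Let $1/4\le\beta<1/3$ and let $G$ be a graph of order $n$ with minimum degree $(1-\beta)n$. Then $$(1+3\beta)k_3+\frac{2}{1-2\beta}\left(1-3\beta+\frac{4\beta-1}{29-75\beta}\right)\sum_{T\in\mathcal{K}_3}D_+(T)\ \ge\ 2(1-2\beta)\beta n k_2+\frac{4k_4}{n}.$$ Moreover, if equality holds, then $G$ is $(1-\beta)n$-regular and every edge $e$ satisfies $D(e)=1-2\beta$ or $D(e)=2\beta$.
   Context: All graphs are finite and simple. For a graph $G$, $\mathcal{K}_t$ is the set of $t$-cliques and $k_t=|\mathcal{K}_t|$. The degree $d(T)$ of a clique $T$ is the number of cliques with one more vertex containing $T$, and $D(T)=d(T)/n$. Here $p=\lceil\beta^{-1}\rceil-1=3$. For $T\in\mathcal{K}_t$, $1\le t\le 4$, $D_-(T)=\min\{D(T),(4-t)\beta\}$ and $D_+(T)=D(T)-D_-(T)$. *)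

theory Defs
  imports Complex_Main
begin

definition simple_graph :: "'a set \<Rightarrow> ('a \<Rightarrow> 'a \<Rightarrow> bool) \<Rightarrow> bool" where
  "simple_graph V E \<longleftrightarrow> finite V \<and> (\<forall>u v. E u v \<longrightarrow> u \<in> V \<and> v \<in> V)
     \<and> (\<forall>u v. E u v \<longrightarrow> E v u) \<and> (\<forall>u. \<not> E u u)"

definition vdeg :: "'a set \<Rightarrow> ('a \<Rightarrow> 'a \<Rightarrow> bool) \<Rightarrow> 'a \<Rightarrow> nat" where
  "vdeg V E v = card {u \<in> V. E v u}"

definition cliques :: "'a set \<Rightarrow> ('a \<Rightarrow> 'a \<Rightarrow> bool) \<Rightarrow> nat \<Rightarrow> 'a set set" where
  "cliques V E t = {S. S \<subseteq> V \<and> card S = t \<and> (\<forall>u\<in>S. \<forall>v\<in>S. u \<noteq> v \<longrightarrow> E u v)}"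

definition kcl :: "'a set \<Rightarrow> ('a \<Rightarrow> 'a \<Rightarrow> bool) \<Rightarrow> nat \<Rightarrow> nat" where
  "kcl V E t = card (cliques V E t)"

definition cdeg :: "'a set \<Rightarrow> ('a \<Rightarrow> 'a \<Rightarrow> bool) \<Rightarrow> 'a set \<Rightarrow> nat" where
  "cdeg V E T = card {S \<in> cliques V E (card T + 1). T \<subseteq> S}"

definition Dn :: "'a set \<Rightarrow> ('a \<Rightarrow> 'a \<Rightarrow> bool) \<Rightarrow> 'a set \<Rightarrow> real" where
  "Dn V E T = real (cdeg V E T) / real (card V)"

definition Dminus :: "real \<Rightarrow> 'a set \<Rightarrow> ('a \<Rightarrow> 'a \<Rightarrow> bool) \<Rightarrow> 'a set \<Rightarrow> real" where
  "Dminus \<beta> V E T = min (Dn V E T) ((4 - real (card T)) * \<beta>)"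

definition Dplus :: "real \<Rightarrow> 'a set \<Rightarrow> ('a \<Rightarrow> 'a \<Rightarrow> bool) \<Rightarrow> 'a set \<Rightarrow> real" where
  "Dplus \<beta> V E T = Dn V E T - Dminus \<beta> V E T"

end

theory Submission
  imports Defs
begin

text \<open>
  Every edge \<open>e\<close> lies in \<open>D(e)n\<close> triangles and every 4-clique contains four triangles, so the
  difference of the two sides is the sum over all triangles \<open>T\<close> of the local defect
  \<open>1 + 3\<beta> + c D\<^sub>+(T) - D(T) - 2(1 - 2\<beta>)\<beta> (1/D(e\<^sub>1) + 1/D(e\<^sub>2) + 1/D(e\<^sub>3))\<close>, where \<open>c\<close> is the
  weight of the statement and \<open>e\<^sub>i\<close> are the edges of \<open>T\<close>; it suffices that each defect is
  non-negative. Inclusion-exclusion on the neighbourhoods of the three vertices, each of size at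
  least \<open>(1 - \<beta>)n\<close>, confines \<open>y = D(T)\<close> and \<open>x\<^sub>i = D(e\<^sub>i)\<close> to \<open>1 - 2\<beta> \<le> x\<^sub>i\<close>,
  \<open>y \<le> x\<^sub>i \<le> y + \<beta>\<close> and \<open>x\<^sub>1 + x\<^sub>2 + x\<^sub>3 \<ge> y + 2 - 3\<beta>\<close>. Bounding the convex function
  \<open>1/x\<close> by its chord over the admissible interval leaves a one-variable inequality in \<open>y\<close>, which
  holds for \<open>y \<le> 1 - 2\<beta>\<close> with equality only at \<open>y \<in> {\<beta>, 1 - 3\<beta>}\<close>, and strictly for
  \<open>y > 1 - 2\<beta>\<close>. Equality therefore forces every edge density to an endpoint \<open>1 - 2\<beta>\<close> or
  \<open>2\<beta>\<close>, and the degree bounds to be tight.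
\<close>

definition plus_weight :: "real \<Rightarrow> real" where
  "plus_weight \<beta> = 2 / (1 - 2*\<beta>) * (1 - 3*\<beta> + (4*\<beta> - 1) / (29 - 75*\<beta>))"

lemma plus_weight_bounds:
  fixes \<beta> :: real
  assumes "1/4 \<le> \<beta>" "\<beta> < 1/3"
  shows "plus_weight \<beta> \<le> 1" and "(1 - plus_weight \<beta>) * (1 - \<beta>) < 1 - 2*\<beta>"
proof -
  define D where "D = (1 - 2*\<beta>) * (29 - 75*\<beta>)"
  have "D > 0" using assms unfolding D_def by simp
  have cancel: "2 / a * (c + e / b) * (a * b) = 2 * (c * b + e)" if "a \<noteq> 0" "b \<noteq> 0"
    for a b c e :: real
    using that by (simp add: field_simps)
  have "plus_weight \<beta> * D = 2 * ((1 - 3*\<beta>) * (29 - 75*\<beta>) + (4*\<beta> - 1))"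
    unfolding plus_weight_def D_def by (rule cancel) (use assms in auto)
  then have gap: "(1 - plus_weight \<beta>) * D = 3 * (4*\<beta> - 1) * (9 - 25*\<beta>)"
    unfolding D_def by (simp add: algebra_simps)
  moreover have "3 * (4*\<beta> - 1) * (9 - 25*\<beta>) \<ge> 0"
    using assms by (intro mult_nonneg_nonneg) auto
  ultimately have "(1 - plus_weight \<beta>) * D \<ge> 0" by simp
  then show "plus_weight \<beta> \<le> 1"
    using \<open>D > 0\<close> by (metis diff_ge_0_iff_ge zero_le_mult_iff linorder_not_le)
  have quadratic: "200*\<beta>^2 - 233*\<beta> + 56 > 0"
  proof -
    have "200*\<beta>^2 - 233*\<beta> + 56 = 200*(\<beta> - 1/3)^2 - (299/3)*\<beta> + 304/9"
      by (simp add: power2_eq_square algebra_simps)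
    moreover have "(\<beta> - 1/3)^2 \<ge> 0" by simp
    ultimately show ?thesis using assms by linarith
  qed
  have "(1 - 2*\<beta>) * D - ((1 - plus_weight \<beta>) * D) * (1 - \<beta>)
      = (1 - 3*\<beta>) * (200*\<beta>^2 - 233*\<beta> + 56)"
    unfolding gap unfolding D_def by (simp add: power2_eq_square algebra_simps)
  moreover have "(1 - 3*\<beta>) * (200*\<beta>^2 - 233*\<beta> + 56) > 0"
    using quadratic assms by simp
  ultimately have "((1 - plus_weight \<beta>) * (1 - \<beta>)) * D < (1 - 2*\<beta>) * D"
    by (simp add: algebra_simps)
  then show "(1 - plus_weight \<beta>) * (1 - \<beta>) < 1 - 2*\<beta>"
    using \<open>D > 0\<close> by simp
qed

lemma inverse_le_chord:
  fixes L U x :: real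
  assumes "0 < L" "L \<le> x" "x \<le> U"
  shows "1/x \<le> (L + U - x) / (L*U)"
    and "1/x = (L + U - x) / (L*U) \<Longrightarrow> x = L \<or> x = U"
proof -
  have "(L + U - x) / (L*U) - 1/x = (x - L) * (U - x) / (x*L*U)"
    using assms by (simp add: field_simps)
  moreover have "(x - L) * (U - x) / (x*L*U) \<ge> 0"
    using assms by simp
  ultimately show "1/x \<le> (L + U - x) / (L*U)" "1/x = (L + U - x) / (L*U) \<Longrightarrow> x = L \<or> x = U"
    using assms by (linarith, auto)
qed

lemma sum3_inverse_le_chord:
  fixes L U S x1 x2 x3 :: real
  assumes "0 < L" and bounds: "\<forall>x\<in>{x1,x2,x3}. L \<le> x \<and> x \<le> U" and "S \<le> x1 + x2 + x3"
  shows "1/x1 + 1/x2 + 1/x3 \<le> (3*(L + U) - S) / (L*U)"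
    and "1/x1 + 1/x2 + 1/x3 = (3*(L + U) - S) / (L*U) \<Longrightarrow>
           (\<forall>x\<in>{x1,x2,x3}. x = L \<or> x = U) \<and> x1 + x2 + x3 = S"
proof -
  have "L \<le> U" using bounds by auto
  then have LU: "L*U > 0" "U \<noteq> 0" using \<open>0 < L\<close> by simp_all
  note chord = inverse_le_chord[OF \<open>0 < L\<close>]
  have c: "1/x1 \<le> (L + U - x1) / (L*U)" "1/x2 \<le> (L + U - x2) / (L*U)" "1/x3 \<le> (L + U - x3) / (L*U)"
    using chord(1) bounds by auto
  have sum: "(L + U - x1) / (L*U) + (L + U - x2) / (L*U) + (L + U - x3) / (L*U)
      = (3*(L + U) - S) / (L*U) - (x1 + x2 + x3 - S) / (L*U)"
    using LU \<open>0 < L\<close> by (simp add: field_simps)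
  have "(x1 + x2 + x3 - S) / (L*U) \<ge> 0" using LU assms(3) by simp
  then show "1/x1 + 1/x2 + 1/x3 \<le> (3*(L + U) - S) / (L*U)" using c sum by linarith
  assume "1/x1 + 1/x2 + 1/x3 = (3*(L + U) - S) / (L*U)"
  then have "1/x1 = (L + U - x1) / (L*U)" "1/x2 = (L + U - x2) / (L*U)"
      "1/x3 = (L + U - x3) / (L*U)" "(x1 + x2 + x3 - S) / (L*U) = 0"
    using c sum \<open>(x1 + x2 + x3 - S) / (L*U) \<ge> 0\<close> by linarith+
  then show "(\<forall>x\<in>{x1,x2,x3}. x = L \<or> x = U) \<and> x1 + x2 + x3 = S"
    using chord(2) bounds LU by auto
qed

text \<open>For a triangle \<open>T\<close> with \<open>D(T) = y\<close>, \<open>y - min y \<beta>\<close> is \<open>D\<^sub>+(T)\<close>; the \<open>x\<^sub>i\<close> are the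
  densities of its edges.\<close>

definition triangle_defect :: "real \<Rightarrow> real \<Rightarrow> real \<Rightarrow> real \<Rightarrow> real \<Rightarrow> real" where
  "triangle_defect \<beta> y x1 x2 x3 = 1 + 3*\<beta> + plus_weight \<beta> * (y - min y \<beta>) - y
     - 2*(1 - 2*\<beta>)*\<beta> * (1/x1 + 1/x2 + 1/x3)"

lemma low_density_chord_bound:
  fixes \<beta> y :: real
  assumes "1/4 \<le> \<beta>" "\<beta> < 1/3" "1 - 3*\<beta> \<le> y" "y \<le> 1 - 2*\<beta>"
  defines "m \<equiv> (1 + 3*\<beta> + plus_weight \<beta> * (y - min y \<beta>) - y) * (y + \<beta>) - 2*\<beta>*(1 + 2*y)"
  shows "0 \<le> m" and "m = 0 \<Longrightarrow> y = \<beta> \<or> y = 1 - 3*\<beta>"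
proof -
  have "0 \<le> m \<and> (m = 0 \<longrightarrow> y = \<beta> \<or> y = 1 - 3*\<beta>)"
  proof (cases "y \<le> \<beta>")
    case True
    then have "m = (\<beta> - y) * (y - (1 - 3*\<beta>))"
      unfolding m_def by (simp add: algebra_simps)
    then show ?thesis using True assms(3) by auto
  next
    case False
    then have m: "m = (y - \<beta>) * ((1 - 2*\<beta>) - (1 - plus_weight \<beta>) * (y + \<beta>))"
      unfolding m_def by (simp add: algebra_simps)
    have "(1 - plus_weight \<beta>) * (y + \<beta>) \<le> (1 - plus_weight \<beta>) * (1 - \<beta>)"
      using plus_weight_bounds(1)[OF assms(1,2)] assms(4) by (intro mult_left_mono) auto
    then have "(1 - plus_weight \<beta>) * (y + \<beta>) < 1 - 2*\<beta>"
      using plus_weight_bounds(2)[OF assms(1,2)] by linarith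
    then show ?thesis using m False by simp
  qed
  then show "0 \<le> m" "m = 0 \<Longrightarrow> y = \<beta> \<or> y = 1 - 3*\<beta>" by auto
qed

lemma triangle_defect_low:
  fixes \<beta> y x1 x2 x3 :: real
  assumes beta: "1/4 \<le> \<beta>" "\<beta> < 1/3"
    and bounds: "\<forall>x\<in>{x1,x2,x3}. 1 - 2*\<beta> \<le> x \<and> x \<le> y + \<beta>"
    and sum: "y + 2 - 3*\<beta> \<le> x1 + x2 + x3" and low: "y \<le> 1 - 2*\<beta>"
  shows "0 \<le> triangle_defect \<beta> y x1 x2 x3"
    and "triangle_defect \<beta> y x1 x2 x3 = 0 \<Longrightarrow>
           (\<forall>x\<in>{x1,x2,x3}. x = 1 - 2*\<beta> \<or> x = 2*\<beta>) \<and> x1 + x2 + x3 = y + 2 - 3*\<beta>"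
proof -
  define a U where "a = 1 - 2*\<beta>" and "U = y + \<beta>"
  have "a > 0" using beta unfolding a_def by simp
  have "1 - 3*\<beta> \<le> y" using bounds by auto
  then have "U > 0" using beta unfolding U_def by simp
  have bounds': "\<forall>x\<in>{x1,x2,x3}. a \<le> x \<and> x \<le> U" using bounds unfolding a_def U_def .
  have chord: "3*(a + U) - (y + 2 - 3*\<beta>) = 1 + 2*y" unfolding a_def U_def by simp
  note sum3 = sum3_inverse_le_chord[OF \<open>a > 0\<close> bounds' sum, unfolded chord]
  define m where "m = (1 + 3*\<beta> + plus_weight \<beta> * (y - min y \<beta>) - y) * U - 2*\<beta>*(1 + 2*y)"
  define S where "S = 1/x1 + 1/x2 + 1/x3"
  define gap where "gap = (1 + 2*y) / (a*U) - S"
  have "gap \<ge> 0" using sum3(1) unfolding gap_def S_def by simp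
  have "m \<ge> 0" and m0: "m = 0 \<Longrightarrow> y = \<beta> \<or> y = 1 - 3*\<beta>"
    using low_density_chord_bound[OF beta \<open>1 - 3*\<beta> \<le> y\<close> low] unfolding m_def U_def by auto
  have defect: "triangle_defect \<beta> y x1 x2 x3 = m / U + 2*a*\<beta> * gap"
    using \<open>a > 0\<close> \<open>U > 0\<close> unfolding triangle_defect_def S_def[symmetric] m_def gap_def a_def
    by (simp add: field_simps)
  have "m / U \<ge> 0" "2*a*\<beta> * gap \<ge> 0"
    using \<open>m \<ge> 0\<close> \<open>gap \<ge> 0\<close> \<open>a > 0\<close> \<open>U > 0\<close> beta by simp_all
  then show "0 \<le> triangle_defect \<beta> y x1 x2 x3" unfolding defect by simp
  assume "triangle_defect \<beta> y x1 x2 x3 = 0"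
  then have "m / U = 0" "2*a*\<beta> * gap = 0"
    using \<open>m / U \<ge> 0\<close> \<open>2*a*\<beta> * gap \<ge> 0\<close> unfolding defect by linarith+
  then have "m = 0" "S = (1 + 2*y) / (a*U)"
    using \<open>a > 0\<close> \<open>U > 0\<close> beta unfolding gap_def by simp_all
  then have "U = 2*\<beta> \<or> U = 1 - 2*\<beta>" and "(\<forall>x\<in>{x1,x2,x3}. x = a \<or> x = U) \<and> x1 + x2 + x3 = y + 2 - 3*\<beta>"
    using m0 sum3(2) unfolding S_def U_def by auto
  then show "(\<forall>x\<in>{x1,x2,x3}. x = 1 - 2*\<beta> \<or> x = 2*\<beta>) \<and> x1 + x2 + x3 = y + 2 - 3*\<beta>"
    unfolding a_def by auto
qed

lemma triangle_defect_high:
  fixes \<beta> y x1 x2 x3 :: real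
  assumes beta: "1/4 \<le> \<beta>" "\<beta> < 1/3"
    and bounds: "\<forall>x\<in>{x1,x2,x3}. y \<le> x \<and> x \<le> y + \<beta>"
    and sum: "y + 2 - 3*\<beta> \<le> x1 + x2 + x3" and high: "1 - 2*\<beta> < y" and "y \<le> 1"
  shows "0 < triangle_defect \<beta> y x1 x2 x3"
proof -
  define a U K where "a = 1 - 2*\<beta>" and "U = y + \<beta>" and "K = 2*(1 - 2*\<beta>)*\<beta>"
  have "y > 0" "y > \<beta>" "U > 0" "K > 0" "1 - \<beta> > 0"
    using beta high unfolding U_def K_def by simp_all
  have chord: "3*(y + U) - (y + 2 - 3*\<beta>) = 5*y + 6*\<beta> - 2" unfolding U_def by simp
  have "\<forall>x\<in>{x1,x2,x3}. y \<le> x \<and> x \<le> U" using bounds unfolding U_def .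
  note sum3 = sum3_inverse_le_chord(1)[OF \<open>y > 0\<close> this sum, unfolded chord]
  define f where "f = 1 + 2*\<beta> - (1 - plus_weight \<beta>) * (y - \<beta>)"
  have defect: "triangle_defect \<beta> y x1 x2 x3 = f - K * (1/x1 + 1/x2 + 1/x3)"
    using \<open>y > \<beta>\<close> unfolding triangle_defect_def f_def K_def by (simp add: algebra_simps)
  define F where "F = (1 + 2*\<beta>) * (1 - \<beta>) - a * (y - \<beta>)"
  have "(1 - plus_weight \<beta>) * (1 - \<beta>) * (y - \<beta>) < a * (y - \<beta>)"
    using plus_weight_bounds(2)[OF beta] \<open>y > \<beta>\<close> unfolding a_def by simp
  then have "F < (1 - \<beta>) * f" unfolding F_def f_def by (simp add: algebra_simps)
  \<comment> \<open>the cleared-denominator bound vanishes at the regime boundary \<open>y = a\<close>\<close>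
  define Q where "Q = - a*y^2 + \<beta>*(5 - 6*\<beta>)*y - 4*\<beta>*(1 - \<beta>)*(1 - 3*\<beta>)"
  have Q: "F*y*U - (1 - \<beta>)*K*(5*y + 6*\<beta> - 2) = (y - a) * Q"
    unfolding F_def Q_def U_def K_def a_def by (simp add: power2_eq_square algebra_simps)
  have "Q \<ge> 0"
  proof -
    have "\<beta>*(5 - 6*\<beta>) - a*y - (6*\<beta> - 1) * (1 - \<beta>) = (1 - y) * (1 - 2*\<beta>)"
      unfolding a_def by (simp add: algebra_simps)
    moreover have "(1 - y) * (1 - 2*\<beta>) \<ge> 0" using \<open>y \<le> 1\<close> beta by simp
    ultimately have "(6*\<beta> - 1) * (1 - \<beta>) \<le> \<beta>*(5 - 6*\<beta>) - a*y" by linarith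
    then have "y * ((6*\<beta> - 1) * (1 - \<beta>)) \<le> y * (\<beta>*(5 - 6*\<beta>) - a*y)"
      using \<open>y > 0\<close> by (intro mult_left_mono) auto
    moreover have "a * ((6*\<beta> - 1) * (1 - \<beta>)) \<le> y * ((6*\<beta> - 1) * (1 - \<beta>))"
      using high beta unfolding a_def by (intro mult_right_mono) auto
    moreover have "a * ((6*\<beta> - 1) * (1 - \<beta>)) - 4*\<beta>*(1 - \<beta>)*(1 - 3*\<beta>) = (4*\<beta> - 1) * (1 - \<beta>)"
      unfolding a_def by (simp add: algebra_simps)
    moreover have "(4*\<beta> - 1) * (1 - \<beta>) \<ge> 0" using beta by simp
    ultimately show ?thesis unfolding Q_def by (simp add: power2_eq_square algebra_simps)
  qed
  moreover have "y - a > 0" using high unfolding a_def by simp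
  ultimately have "(y - a) * Q \<ge> 0" by simp
  then have "(1 - \<beta>)*K*(5*y + 6*\<beta> - 2) \<le> F*y*U" using Q by linarith
  also have "\<dots> < (1 - \<beta>) * (f * y * U)"
    using \<open>F < (1 - \<beta>) * f\<close> \<open>y > 0\<close> \<open>U > 0\<close> by simp
  finally have "K*(5*y + 6*\<beta> - 2) < f * y * U"
    using \<open>1 - \<beta> > 0\<close> by (simp add: mult.assoc)
  then have "K * ((5*y + 6*\<beta> - 2) / (y*U)) < f"
    using \<open>y > 0\<close> \<open>U > 0\<close> by (simp add: field_simps)
  moreover have "K * (1/x1 + 1/x2 + 1/x3) \<le> K * ((5*y + 6*\<beta> - 2) / (y*U))"
    using sum3 \<open>K > 0\<close> by (intro mult_left_mono) auto
  ultimately show ?thesis unfolding defect by linarith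
qed

lemma triangle_defect_nonneg:
  fixes \<beta> y x1 x2 x3 :: real
  assumes beta: "1/4 \<le> \<beta>" "\<beta> < 1/3"
    and bounds: "\<forall>x\<in>{x1,x2,x3}. 1 - 2*\<beta> \<le> x \<and> y \<le> x \<and> x \<le> y + \<beta>"
    and sum: "y + 2 - 3*\<beta> \<le> x1 + x2 + x3" and "y \<le> 1"
  shows "0 \<le> triangle_defect \<beta> y x1 x2 x3"
    and "triangle_defect \<beta> y x1 x2 x3 = 0 \<Longrightarrow>
           (\<forall>x\<in>{x1,x2,x3}. x = 1 - 2*\<beta> \<or> x = 2*\<beta>) \<and> x1 + x2 + x3 = y + 2 - 3*\<beta>"
proof -
  have "\<forall>x\<in>{x1,x2,x3}. 1 - 2*\<beta> \<le> x \<and> x \<le> y + \<beta>" "\<forall>x\<in>{x1,x2,x3}. y \<le> x \<and> x \<le> y + \<beta>"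
    using bounds by auto
  note low = triangle_defect_low[OF beta this(1) sum] and high = triangle_defect_high[OF beta this(2) sum]
  show "0 \<le> triangle_defect \<beta> y x1 x2 x3"
    using low(1) high \<open>y \<le> 1\<close> by (cases "y \<le> 1 - 2*\<beta>") force+
  show "triangle_defect \<beta> y x1 x2 x3 = 0 \<Longrightarrow>
           (\<forall>x\<in>{x1,x2,x3}. x = 1 - 2*\<beta> \<or> x = 2*\<beta>) \<and> x1 + x2 + x3 = y + 2 - 3*\<beta>"
    using low(2) high \<open>y \<le> 1\<close> by (cases "y \<le> 1 - 2*\<beta>") force+
qed

lemma card_add_le_card_Int_add:
  assumes "finite V" "A \<subseteq> V" "B \<subseteq> V"
  shows "card A + card B \<le> card (A \<inter> B) + card V"
proof -
  have "card (A \<union> B) \<le> card V" using assms by (intro card_mono) auto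
  moreover have "finite A" "finite B" using assms finite_subset by blast+
  ultimately show ?thesis using card_Un_Int[of A B] by linarith
qed

lemma card_three_add_le:
  assumes "finite V" "A \<subseteq> V" "B \<subseteq> V" "C \<subseteq> V"
  shows "card A + card B + card C + card (A \<inter> B \<inter> C)
           \<le> card V + card (A \<inter> B) + card (A \<inter> C) + card (B \<inter> C)"
proof -
  have fin: "finite A" "finite B" "finite C" using assms finite_subset by blast+
  have "card (A \<union> B \<union> C) \<le> card V" using assms by (intro card_mono) auto
  moreover have "card (A \<union> B) + card C = card (A \<union> B \<union> C) + card ((A \<inter> C) \<union> (B \<inter> C))"
    using card_Un_Int[of "A \<union> B" C] fin by (simp add: Int_Un_distrib2)
  moreover have "card (A \<inter> C) + card (B \<inter> C) = card ((A \<inter> C) \<union> (B \<inter> C)) + card (A \<inter> B \<inter> C)"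
    using card_Un_Int[of "A \<inter> C" "B \<inter> C"] fin by (simp add: Int_ac)
  ultimately show ?thesis using card_Un_Int[of A B] fin by linarith
qed

definition common_nbrs :: "'a set \<Rightarrow> ('a \<Rightarrow> 'a \<Rightarrow> bool) \<Rightarrow> 'a set \<Rightarrow> 'a set" where
  "common_nbrs V E T = {w \<in> V. \<forall>v\<in>T. E v w}"

lemma common_nbrs_subset: "common_nbrs V E T \<subseteq> V"
  by (auto simp: common_nbrs_def)

lemma common_nbrs_Un: "common_nbrs V E (S \<union> T) = common_nbrs V E S \<inter> common_nbrs V E T"
  by (auto simp: common_nbrs_def)

lemma finite_cliques: "simple_graph V E \<Longrightarrow> finite (cliques V E t)"
  by (rule finite_subset[of _ "Pow V"]) (auto simp: cliques_def simple_graph_def)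

lemma clique_subset: "T \<in> cliques V E t \<Longrightarrow> S \<subseteq> T \<Longrightarrow> S \<in> cliques V E (card S)"
  by (auto simp: cliques_def)

lemma cdeg_eq_card_common_nbrs:
  assumes graph: "simple_graph V E" and T: "T \<in> cliques V E t"
  shows "cdeg V E T = card (common_nbrs V E T)"
proof -
  have "finite T" "T \<subseteq> V" and clique: "\<forall>u\<in>T. \<forall>v\<in>T. u \<noteq> v \<longrightarrow> E u v"
    using T graph finite_subset by (auto simp: cliques_def simple_graph_def)
  have outside: "w \<notin> T" if "w \<in> common_nbrs V E T" for w
    using that graph by (auto simp: common_nbrs_def simple_graph_def)
  have "{S \<in> cliques V E (card T + 1). T \<subseteq> S} = (\<lambda>w. insert w T) ` common_nbrs V E T"
  proof (intro equalityI subsetI)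
    fix S assume "S \<in> {S \<in> cliques V E (card T + 1). T \<subseteq> S}"
    then have S: "S \<subseteq> V" "card S = card T + 1" "T \<subseteq> S" "\<forall>u\<in>S. \<forall>v\<in>S. u \<noteq> v \<longrightarrow> E u v"
      by (auto simp: cliques_def)
    then have "card (S - T) = 1" using card_Diff_subset[OF \<open>finite T\<close>] by simp
    then obtain w where w: "S - T = {w}" by (auto simp: card_Suc_eq)
    then have "w \<in> common_nbrs V E T" using S unfolding common_nbrs_def by blast
    moreover have "S = insert w T" using w S by auto
    ultimately show "S \<in> (\<lambda>w. insert w T) ` common_nbrs V E T" by blast
  next
    fix S assume "S \<in> (\<lambda>w. insert w T) ` common_nbrs V E T"
    then obtain w where w: "w \<in> common_nbrs V E T" and S: "S = insert w T" by blast
    then show "S \<in> {S \<in> cliques V E (card T + 1). T \<subseteq> S}"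
      using outside[OF w] \<open>finite T\<close> \<open>T \<subseteq> V\<close> clique graph
      by (auto simp: cliques_def common_nbrs_def simple_graph_def)
  qed
  moreover have "inj_on (\<lambda>w. insert w T) (common_nbrs V E T)"
    using outside by (auto intro!: inj_onI)
  ultimately show ?thesis unfolding cdeg_def by (simp add: card_image)
qed

lemma Dn_clique:
  "simple_graph V E \<Longrightarrow> T \<in> cliques V E t \<Longrightarrow>
     Dn V E T = real (card (common_nbrs V E T)) / real (card V)"
  unfolding Dn_def by (simp add: cdeg_eq_card_common_nbrs)

lemma Dn_singleton:
  assumes "simple_graph V E" "v \<in> V"
  shows "Dn V E {v} = real (vdeg V E v) / real (card V)"
proof -
  have "{v} \<in> cliques V E 1" using assms by (simp add: cliques_def)
  moreover have "common_nbrs V E {v} = {w \<in> V. E v w}" by (simp add: common_nbrs_def)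
  ultimately show ?thesis using assms(1) by (simp add: Dn_clique vdeg_def)
qed

lemma Dn_le_one: "simple_graph V E \<Longrightarrow> T \<in> cliques V E t \<Longrightarrow> Dn V E T \<le> 1"
  using card_mono[OF _ common_nbrs_subset, of V E T]
  by (auto simp: Dn_clique simple_graph_def divide_le_eq_1)

lemma Dn_antimono:
  assumes "simple_graph V E" "T \<in> cliques V E t" "S \<subseteq> T"
  shows "Dn V E T \<le> Dn V E S"
proof -
  have "common_nbrs V E T \<subseteq> common_nbrs V E S" using assms(3) by (auto simp: common_nbrs_def)
  then have "card (common_nbrs V E T) \<le> card (common_nbrs V E S)"
    using assms(1) finite_subset[OF common_nbrs_subset] by (intro card_mono) (auto simp: simple_graph_def)
  then show ?thesis
    using assms clique_subset[OF assms(2,3)] by (simp add: Dn_clique divide_right_mono)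
qed

lemma Dn_Un_lower:
  assumes graph: "simple_graph V E" and clique: "S \<union> T \<in> cliques V E t"
  shows "Dn V E S + Dn V E T \<le> Dn V E (S \<union> T) + 1"
proof (cases "card V = 0")
  case False
  have "card (common_nbrs V E S) + card (common_nbrs V E T) \<le> card (common_nbrs V E (S \<union> T)) + card V"
    unfolding common_nbrs_Un using graph
    by (intro card_add_le_card_Int_add common_nbrs_subset) (simp add: simple_graph_def)
  then have "real (card (common_nbrs V E S) + card (common_nbrs V E T)) / card V
      \<le> real (card (common_nbrs V E (S \<union> T)) + card V) / card V"
    by (intro divide_right_mono) simp_all
  then have "real (card (common_nbrs V E S)) / card V + real (card (common_nbrs V E T)) / card V
      \<le> real (card (common_nbrs V E (S \<union> T))) / card V + 1"
    using False by (simp add: add_divide_distrib)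
  then show ?thesis
    using graph clique clique_subset[OF clique, of S] clique_subset[OF clique, of T] by (simp add: Dn_clique)
qed (simp add: Dn_def)

lemma Dn_Un3_lower:
  assumes graph: "simple_graph V E" and clique: "X \<union> Y \<union> Z \<in> cliques V E t"
  shows "Dn V E X + Dn V E Y + Dn V E Z + Dn V E (X \<union> Y \<union> Z)
           \<le> 1 + Dn V E (X \<union> Y) + Dn V E (X \<union> Z) + Dn V E (Y \<union> Z)"
proof (cases "card V = 0")
  case False
  let ?c = "\<lambda>A. real (card (common_nbrs V E A))"
  have "card (common_nbrs V E X) + card (common_nbrs V E Y) + card (common_nbrs V E Z)
          + card (common_nbrs V E (X \<union> Y \<union> Z))
        \<le> card V + card (common_nbrs V E (X \<union> Y)) + card (common_nbrs V E (X \<union> Z))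
          + card (common_nbrs V E (Y \<union> Z))"
    unfolding common_nbrs_Un using graph
    by (intro card_three_add_le common_nbrs_subset) (simp add: simple_graph_def)
  then have "(?c X + ?c Y + ?c Z + ?c (X \<union> Y \<union> Z)) / card V
      \<le> (card V + ?c (X \<union> Y) + ?c (X \<union> Z) + ?c (Y \<union> Z)) / card V"
    by (intro divide_right_mono) simp_all
  then have "?c X / card V + ?c Y / card V + ?c Z / card V + ?c (X \<union> Y \<union> Z) / card V
      \<le> 1 + ?c (X \<union> Y) / card V + ?c (X \<union> Z) / card V + ?c (Y \<union> Z) / card V"
    using False by (simp add: add_divide_distrib)
  moreover have Dn: "Dn V E A = ?c A / card V" if "A \<subseteq> X \<union> Y \<union> Z" for A
    using Dn_clique[OF graph clique_subset[OF clique that]] .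
  moreover have "X \<subseteq> X \<union> Y \<union> Z" "Y \<subseteq> X \<union> Y \<union> Z" "Z \<subseteq> X \<union> Y \<union> Z"
    "X \<union> Y \<subseteq> X \<union> Y \<union> Z" "X \<union> Z \<subseteq> X \<union> Y \<union> Z" "Y \<union> Z \<subseteq> X \<union> Y \<union> Z"
    by auto
  ultimately show ?thesis by (simp only: Dn order_refl)
qed (simp add: Dn_def)

lemma Dn_singleton_ge:
  assumes graph: "simple_graph V E"
    and mindeg: "\<forall>v\<in>V. real (vdeg V E v) \<ge> (1 - \<beta>) * real (card V)" and "v \<in> V"
  shows "1 - \<beta> \<le> Dn V E {v}"
proof -
  have "card V > 0" using graph \<open>v \<in> V\<close> card_gt_0_iff by (auto simp: simple_graph_def)
  then show ?thesis using mindeg \<open>v \<in> V\<close> by (simp add: Dn_singleton[OF graph] pos_le_divide_eq)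
qed

lemma edge_density_ge:
  assumes graph: "simple_graph V E"
    and mindeg: "\<forall>v\<in>V. real (vdeg V E v) \<ge> (1 - \<beta>) * real (card V)" and e: "e \<in> cliques V E 2"
  shows "1 - 2*\<beta> \<le> Dn V E e"
proof -
  obtain u v where "e = {u} \<union> {v}" "u \<in> V" "v \<in> V"
    using e by (auto simp: cliques_def card_2_iff)
  then have "Dn V E {u} + Dn V E {v} \<le> Dn V E e + 1"
    using Dn_Un_lower[OF graph, of "{u}" "{v}"] e by simp
  then show ?thesis
    using Dn_singleton_ge[OF graph mindeg \<open>u \<in> V\<close>] Dn_singleton_ge[OF graph mindeg \<open>v \<in> V\<close>]
    by linarith
qed

lemma triangle_edge_density_bounds:
  assumes graph: "simple_graph V E"
    and mindeg: "\<forall>v\<in>V. real (vdeg V E v) \<ge> (1 - \<beta>) * real (card V)"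
    and T: "T \<in> cliques V E 3" and "e \<subseteq> T" "card e = 2"
  shows "1 - 2*\<beta> \<le> Dn V E e \<and> Dn V E T \<le> Dn V E e \<and> Dn V E e \<le> Dn V E T + \<beta>"
proof -
  have "e \<in> cliques V E 2" using clique_subset[OF T \<open>e \<subseteq> T\<close>] \<open>card e = 2\<close> by simp
  have "finite T" "card T = 3" "T \<subseteq> V" using T by (auto simp: cliques_def intro: card_ge_0_finite)
  then have "card (T - e) = 1"
    using \<open>e \<subseteq> T\<close> \<open>card e = 2\<close> card_Diff_subset[of e T] finite_subset by fastforce
  then obtain z where "T - e = {z}" by (auto simp: card_Suc_eq)
  then have "T = e \<union> {z}" "z \<in> V" using \<open>e \<subseteq> T\<close> \<open>T \<subseteq> V\<close> by auto
  then have "Dn V E e + Dn V E {z} \<le> Dn V E T + 1"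
    using Dn_Un_lower[OF graph, of e "{z}"] T by simp
  then show ?thesis
    using edge_density_ge[OF graph mindeg \<open>e \<in> cliques V E 2\<close>] Dn_antimono[OF graph T \<open>e \<subseteq> T\<close>]
      Dn_singleton_ge[OF graph mindeg \<open>z \<in> V\<close>] by linarith
qed

definition clique_defect :: "real \<Rightarrow> 'a set \<Rightarrow> ('a \<Rightarrow> 'a \<Rightarrow> bool) \<Rightarrow> 'a set \<Rightarrow> real" where
  "clique_defect \<beta> V E T = 1 + 3*\<beta> + plus_weight \<beta> * Dplus \<beta> V E T - Dn V E T
     - 2*(1 - 2*\<beta>)*\<beta> * (\<Sum>e\<in>{e \<in> cliques V E 2. e \<subseteq> T}. 1 / Dn V E e)"

lemma edges_of_triangle:
  assumes T: "{u,v,w} \<in> cliques V E 3"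
  shows "{e \<in> cliques V E 2. e \<subseteq> {u,v,w}} = {{u,v}, {u,w}, {v,w}}"
proof (intro equalityI subsetI)
  fix e assume "e \<in> {e \<in> cliques V E 2. e \<subseteq> {u,v,w}}"
  then obtain a b where "e = {a,b}" "a \<noteq> b" "{a,b} \<subseteq> {u,v,w}" by (auto simp: cliques_def card_2_iff)
  then show "e \<in> {{u,v}, {u,w}, {v,w}}" by (auto simp: insert_commute)
next
  have "card {u,v,w} = 3" using T by (simp add: cliques_def)
  then have "u \<noteq> v \<and> u \<noteq> w \<and> v \<noteq> w" by (auto simp: card_insert_if split: if_splits)
  then show "e \<in> {e \<in> cliques V E 2. e \<subseteq> {u,v,w}}" if "e \<in> {{u,v}, {u,w}, {v,w}}" for e
    using that clique_subset[OF T, of e] by (auto simp: numeral_2_eq_2)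
qed

lemma clique_defect_triangle:
  assumes T: "{u,v,w} \<in> cliques V E 3"
  shows "clique_defect \<beta> V E {u,v,w}
           = triangle_defect \<beta> (Dn V E {u,v,w}) (Dn V E {u,v}) (Dn V E {u,w}) (Dn V E {v,w})"
proof -
  have "card {u,v,w} = 3" using T by (simp add: cliques_def)
  then have "u \<noteq> v" "u \<noteq> w" "v \<noteq> w" by (auto simp: card_insert_if split: if_splits)
  then have "(\<Sum>e\<in>{{u,v}, {u,w}, {v,w}}. 1 / Dn V E e) = 1 / Dn V E {u,v} + 1 / Dn V E {u,w} + 1 / Dn V E {v,w}"
    by (simp add: doubleton_eq_iff)
  then show ?thesis
    using \<open>card {u,v,w} = 3\<close> unfolding clique_defect_def triangle_defect_def edges_of_triangle[OF T]
    by (simp add: Dplus_def Dminus_def algebra_simps)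
qed

lemma triangle_density_constraints:
  assumes graph: "simple_graph V E"
    and mindeg: "\<forall>v\<in>V. real (vdeg V E v) \<ge> (1 - \<beta>) * real (card V)"
    and T: "{u,v,w} \<in> cliques V E 3"
  shows "\<forall>x\<in>{Dn V E {u,v}, Dn V E {u,w}, Dn V E {v,w}}.
           1 - 2*\<beta> \<le> x \<and> Dn V E {u,v,w} \<le> x \<and> x \<le> Dn V E {u,v,w} + \<beta>"
    and "Dn V E {u} + Dn V E {v} + Dn V E {w} + Dn V E {u,v,w}
           \<le> 1 + Dn V E {u,v} + Dn V E {u,w} + Dn V E {v,w}"
proof -
  have "{u,w} \<subseteq> {u,v,w}" "{v,w} \<subseteq> {u,v,w}" by auto
  then show "\<forall>x\<in>{Dn V E {u,v}, Dn V E {u,w}, Dn V E {v,w}}.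
           1 - 2*\<beta> \<le> x \<and> Dn V E {u,v,w} \<le> x \<and> x \<le> Dn V E {u,v,w} + \<beta>"
    using triangle_edge_density_bounds[OF graph mindeg T] T
    by (auto simp: cliques_def card_insert_if split: if_splits)
  show "Dn V E {u} + Dn V E {v} + Dn V E {w} + Dn V E {u,v,w}
           \<le> 1 + Dn V E {u,v} + Dn V E {u,w} + Dn V E {v,w}"
    using Dn_Un3_lower[OF graph, of "{u}" "{v}" "{w}"] T by (simp add: insert_commute)
qed

lemma vdeg_eq_iff_Dn_singleton:
  assumes graph: "simple_graph V E" and "v \<in> V"
  shows "real (vdeg V E v) = c * real (card V) \<longleftrightarrow> Dn V E {v} = c"
proof -
  have "card V > 0" using assms card_gt_0_iff by (auto simp: simple_graph_def)
  then show ?thesis using Dn_singleton[OF assms] by (auto simp: divide_eq_eq)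
qed

lemma clique_defect_nonneg:
  assumes graph: "simple_graph V E" and beta: "1/4 \<le> \<beta>" "\<beta> < 1/3"
    and mindeg: "\<forall>v\<in>V. real (vdeg V E v) \<ge> (1 - \<beta>) * real (card V)"
    and T: "T \<in> cliques V E 3"
  shows "0 \<le> clique_defect \<beta> V E T"
    and "clique_defect \<beta> V E T = 0 \<Longrightarrow>
           (\<forall>v\<in>T. real (vdeg V E v) = (1 - \<beta>) * real (card V))
           \<and> (\<forall>e\<in>cliques V E 2. e \<subseteq> T \<longrightarrow> Dn V E e = 1 - 2*\<beta> \<or> Dn V E e = 2*\<beta>)"
proof -
  obtain u v w where uvw: "T = {u,v,w}" using T by (auto simp: cliques_def card_3_iff)
  have "u \<in> V" "v \<in> V" "w \<in> V" using T uvw by (auto simp: cliques_def)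
  note degree = Dn_singleton_ge[OF graph mindeg \<open>u \<in> V\<close>]
    Dn_singleton_ge[OF graph mindeg \<open>v \<in> V\<close>] Dn_singleton_ge[OF graph mindeg \<open>w \<in> V\<close>]
  note constraints = triangle_density_constraints[OF graph mindeg T[unfolded uvw]]
  have "Dn V E {u,v,w} + 2 - 3*\<beta> \<le> Dn V E {u,v} + Dn V E {u,w} + Dn V E {v,w}"
    using constraints(2) degree by linarith
  note triangle = triangle_defect_nonneg[OF beta constraints(1) this Dn_le_one[OF graph T[unfolded uvw]]]
  show "0 \<le> clique_defect \<beta> V E T"
    using triangle(1) clique_defect_triangle[OF T[unfolded uvw]] unfolding uvw by simp
  assume "clique_defect \<beta> V E T = 0"
  then have edges: "\<forall>x\<in>{Dn V E {u,v}, Dn V E {u,w}, Dn V E {v,w}}. x = 1 - 2*\<beta> \<or> x = 2*\<beta>"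
    and "Dn V E {u,v} + Dn V E {u,w} + Dn V E {v,w} = Dn V E {u,v,w} + 2 - 3*\<beta>"
    using triangle(2) clique_defect_triangle[OF T[unfolded uvw]] unfolding uvw by auto
  then have "Dn V E {u} = 1 - \<beta>" "Dn V E {v} = 1 - \<beta>" "Dn V E {w} = 1 - \<beta>"
    using constraints(2) degree by linarith+
  then have "Dn V E {z} = 1 - \<beta>" "z \<in> V" if "z \<in> T" for z
    using that \<open>u \<in> V\<close> \<open>v \<in> V\<close> \<open>w \<in> V\<close> unfolding uvw by auto
  then have "\<forall>z\<in>T. real (vdeg V E z) = (1 - \<beta>) * real (card V)"
    using vdeg_eq_iff_Dn_singleton[OF graph, where c = "1 - \<beta>"] by simp
  moreover have "\<forall>e\<in>cliques V E 2. e \<subseteq> T \<longrightarrow> Dn V E e = 1 - 2*\<beta> \<or> Dn V E e = 2*\<beta>"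
  proof (intro ballI impI)
    fix e assume "e \<in> cliques V E 2" "e \<subseteq> T"
    then have "e \<in> {{u,v}, {u,w}, {v,w}}" using edges_of_triangle[OF T[unfolded uvw]] uvw by blast
    then show "Dn V E e = 1 - 2*\<beta> \<or> Dn V E e = 2*\<beta>" using edges by auto
  qed
  ultimately show "(\<forall>v\<in>T. real (vdeg V E v) = (1 - \<beta>) * real (card V))
           \<and> (\<forall>e\<in>cliques V E 2. e \<subseteq> T \<longrightarrow> Dn V E e = 1 - 2*\<beta> \<or> Dn V E e = 2*\<beta>)" by blast
qed

lemma Dn_pos_imp_extension:
  "0 < Dn V E T \<Longrightarrow> \<exists>S\<in>cliques V E (card T + 1). T \<subseteq> S"
  by (auto simp: Dn_def cdeg_def zero_less_divide_iff card_gt_0_iff)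

lemma card_subcliques:
  assumes S: "S \<in> cliques V E (Suc t)"
  shows "card {T \<in> cliques V E t. T \<subseteq> S} = Suc t"
proof -
  have "finite S" "card S = Suc t" using S by (auto simp: cliques_def intro: card_ge_0_finite)
  moreover have "{T \<in> cliques V E t. T \<subseteq> S} = {T. T \<subseteq> S \<and> card T = t}"
    using clique_subset[OF S] by (auto simp: cliques_def)
  ultimately show ?thesis by (simp add: n_subsets)
qed

lemma sum_cliques_subcliques:
  fixes f :: "'a set \<Rightarrow> real"
  assumes "simple_graph V E"
  shows "(\<Sum>S\<in>cliques V E (Suc t). \<Sum>T\<in>{T \<in> cliques V E t. T \<subseteq> S}. f T)
           = (\<Sum>T\<in>cliques V E t. real (cdeg V E T) * f T)"
proof -
  have "(\<Sum>S\<in>cliques V E (Suc t). \<Sum>T\<in>{T \<in> cliques V E t. T \<subseteq> S}. f T)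
      = (\<Sum>T\<in>cliques V E t. \<Sum>S\<in>{S \<in> cliques V E (Suc t). T \<subseteq> S}. f T)"
    by (rule sum.swap_restrict) (simp_all add: finite_cliques[OF assms])
  also have "\<dots> = (\<Sum>T\<in>cliques V E t. real (cdeg V E T) * f T)"
    by (rule sum.cong) (auto simp: cdeg_def cliques_def)
  finally show ?thesis .
qed

lemma sum_cdeg_cliques:
  assumes "simple_graph V E"
  shows "(\<Sum>T\<in>cliques V E t. real (cdeg V E T)) = real (Suc t) * real (kcl V E (Suc t))"
proof -
  have "(\<Sum>T\<in>cliques V E t. real (cdeg V E T))
      = (\<Sum>S\<in>cliques V E (Suc t). \<Sum>T\<in>{T \<in> cliques V E t. T \<subseteq> S}. 1)"
    using sum_cliques_subcliques[OF assms, where f = "\<lambda>_. 1"] by simp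
  also have "\<dots> = (\<Sum>S\<in>cliques V E (Suc t). real (Suc t))"
    by (rule sum.cong) (simp_all add: card_subcliques)
  finally show ?thesis by (simp add: kcl_def)
qed

lemma sum_inverse_Dn_subcliques:
  assumes "simple_graph V E" and pos: "\<forall>T\<in>cliques V E t. 0 < Dn V E T"
  shows "(\<Sum>S\<in>cliques V E (Suc t). \<Sum>T\<in>{T \<in> cliques V E t. T \<subseteq> S}. 1 / Dn V E T)
           = real (card V) * real (kcl V E t)"
proof -
  have "real (cdeg V E T) * (1 / Dn V E T) = real (card V)" if "T \<in> cliques V E t" for T
    using pos that by (auto simp: Dn_def)
  then show ?thesis by (simp add: sum_cliques_subcliques[OF assms(1)] kcl_def)
qed

lemma sum_clique_defect:
  assumes graph: "simple_graph V E" and "\<beta> < 1/2"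
    and mindeg: "\<forall>v\<in>V. real (vdeg V E v) \<ge> (1 - \<beta>) * real (card V)"
  shows "(\<Sum>T\<in>cliques V E 3. clique_defect \<beta> V E T)
           = (1 + 3*\<beta>) * real (kcl V E 3) + plus_weight \<beta> * (\<Sum>T\<in>cliques V E 3. Dplus \<beta> V E T)
             - (2*(1 - 2*\<beta>)*\<beta> * real (card V) * real (kcl V E 2) + 4 * real (kcl V E 4) / real (card V))"
proof -
  have "\<forall>e\<in>cliques V E 2. 0 < Dn V E e"
    using edge_density_ge[OF graph mindeg] \<open>\<beta> < 1/2\<close> by force
  from sum_inverse_Dn_subcliques[OF graph this]
  have edges: "(\<Sum>T\<in>cliques V E 3. \<Sum>e\<in>{e \<in> cliques V E 2. e \<subseteq> T}. 1 / Dn V E e)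
      = real (card V) * real (kcl V E 2)"
    by (simp add: numeral_3_eq_3)
  have "(\<Sum>T\<in>cliques V E 3. Dn V E T) = (\<Sum>T\<in>cliques V E 3. real (cdeg V E T)) / real (card V)"
    by (simp add: Dn_def sum_divide_distrib)
  also have "\<dots> = 4 * real (kcl V E 4) / real (card V)"
    using sum_cdeg_cliques[OF graph, of 3] by (simp add: numeral_eq_Suc)
  finally have triangles: "(\<Sum>T\<in>cliques V E 3. Dn V E T) = 4 * real (kcl V E 4) / real (card V)" .
  show ?thesis
    unfolding clique_defect_def sum.distrib sum_subtractf sum_distrib_left[symmetric] edges triangles
    by (simp add: kcl_def algebra_simps)
qed

lemma edge_in_triangle:
  assumes graph: "simple_graph V E" and "\<beta> < 1/2"
    and mindeg: "\<forall>v\<in>V. real (vdeg V E v) \<ge> (1 - \<beta>) * real (card V)" and e: "e \<in> cliques V E 2"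
  shows "\<exists>T\<in>cliques V E 3. e \<subseteq> T"
proof -
  have "0 < Dn V E e" using edge_density_ge[OF graph mindeg e] \<open>\<beta> < 1/2\<close> by linarith
  moreover have "card e + 1 = 3" using e by (simp add: cliques_def)
  ultimately show ?thesis using Dn_pos_imp_extension[of V E e] by metis
qed

lemma vertex_in_triangle:
  assumes graph: "simple_graph V E" and "\<beta> < 1/2"
    and mindeg: "\<forall>v\<in>V. real (vdeg V E v) \<ge> (1 - \<beta>) * real (card V)" and "v \<in> V"
  shows "\<exists>T\<in>cliques V E 3. v \<in> T"
proof -
  have "0 < Dn V E {v}" using Dn_singleton_ge[OF graph mindeg \<open>v \<in> V\<close>] \<open>\<beta> < 1/2\<close> by linarith
  then obtain e where "e \<in> cliques V E 2" "v \<in> e" using Dn_pos_imp_extension[of V E "{v}"] by (auto simp: numeral_2_eq_2)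
  then show ?thesis using edge_in_triangle[OF graph \<open>\<beta> < 1/2\<close> mindeg] by blast
qed

theorem mainTheorem15:
  fixes V :: "'a set" and E :: "'a \<Rightarrow> 'a \<Rightarrow> bool" and \<beta> :: real
  assumes graph: "simple_graph V E"
    and beta: "1/4 \<le> \<beta>" "\<beta> < 1/3"
    and mindeg_ge: "\<forall>v\<in>V. real (vdeg V E v) \<ge> (1 - \<beta>) * real (card V)"
    and mindeg_att: "\<exists>v\<in>V. real (vdeg V E v) = (1 - \<beta>) * real (card V)"
  shows "((1 + 3*\<beta>) * real (kcl V E 3)
           + 2 / (1 - 2*\<beta>) * (1 - 3*\<beta> + (4*\<beta> - 1) / (29 - 75*\<beta>))
             * (\<Sum>T\<in>cliques V E 3. Dplus \<beta> V E T)
         \<ge> 2 * (1 - 2*\<beta>) * \<beta> * real (card V) * real (kcl V E 2)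
           + 4 * real (kcl V E 4) / real (card V))
       \<and> ((1 + 3*\<beta>) * real (kcl V E 3)
           + 2 / (1 - 2*\<beta>) * (1 - 3*\<beta> + (4*\<beta> - 1) / (29 - 75*\<beta>))
             * (\<Sum>T\<in>cliques V E 3. Dplus \<beta> V E T)
         = 2 * (1 - 2*\<beta>) * \<beta> * real (card V) * real (kcl V E 2)
           + 4 * real (kcl V E 4) / real (card V)
       \<longrightarrow> (\<forall>v\<in>V. real (vdeg V E v) = (1 - \<beta>) * real (card V))
         \<and> (\<forall>e\<in>cliques V E 2. Dn V E e = 1 - 2*\<beta> \<or> Dn V E e = 2*\<beta>))"
proof -
  have "\<beta> < 1/2" using beta by simp
  note defect_sum = sum_clique_defect[OF graph this mindeg_ge, unfolded plus_weight_def]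
  have nonneg: "\<forall>T\<in>cliques V E 3. 0 \<le> clique_defect \<beta> V E T"
    using clique_defect_nonneg(1)[OF graph beta mindeg_ge] by blast
  then have "0 \<le> (\<Sum>T\<in>cliques V E 3. clique_defect \<beta> V E T)" by (simp add: sum_nonneg)
  then show ?thesis
  proof (intro conjI impI)
    assume "(1 + 3*\<beta>) * real (kcl V E 3)
           + 2 / (1 - 2*\<beta>) * (1 - 3*\<beta> + (4*\<beta> - 1) / (29 - 75*\<beta>))
             * (\<Sum>T\<in>cliques V E 3. Dplus \<beta> V E T)
         = 2 * (1 - 2*\<beta>) * \<beta> * real (card V) * real (kcl V E 2)
           + 4 * real (kcl V E 4) / real (card V)"
    then have "\<forall>T\<in>cliques V E 3. clique_defect \<beta> V E T = 0"
      using defect_sum nonneg sum_nonneg_eq_0_iff[OF finite_cliques[OF graph]] by auto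
    then have tight: "T \<in> cliques V E 3 \<Longrightarrow>
        (\<forall>v\<in>T. real (vdeg V E v) = (1 - \<beta>) * real (card V))
        \<and> (\<forall>e\<in>cliques V E 2. e \<subseteq> T \<longrightarrow> Dn V E e = 1 - 2*\<beta> \<or> Dn V E e = 2*\<beta>)" for T
      using clique_defect_nonneg(2)[OF graph beta mindeg_ge] by blast
    show "\<forall>v\<in>V. real (vdeg V E v) = (1 - \<beta>) * real (card V)"
      using tight vertex_in_triangle[OF graph \<open>\<beta> < 1/2\<close> mindeg_ge] by blast
    show "\<forall>e\<in>cliques V E 2. Dn V E e = 1 - 2*\<beta> \<or> Dn V E e = 2*\<beta>"
      using tight edge_in_triangle[OF graph \<open>\<beta> < 1/2\<close> mindeg_ge] by blast
  qed (use defect_sum in linarith)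
qed

end
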